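(* Let $\mathcal{Z}$ be a sample space, $\mathcal{H}$ a set of hypotheses, $n\in\mathbb{N}$, $\mathcal{D}$ a distribution on $\mathcal{Z}$, $S\sim\mathcal{D}^n$, and let $\mathcal{A}$ be a learning algorithm given by a Markov kernel $\mathcal{P}_{H|S}$, $H=\mathcal{A}(S)$, with $\mathcal{P}_{SH}\ll\mathcal{P}_S\mathcal{P}_H$. Let $\ell:\mathcal{H}\times\mathcal{Z}\to\mathbb{R}$ be a loss function and $\sigma>0$ such that for every $h\in\mathcal{H}$ and every $\eta>0$, $$\mathbb{P}_{S\sim\mathcal{D}^n}\left(|L_S(h)-L_{\mathcal{D}}(h)|>\eta\right)\le2\exp\left(-\frac{\eta^2}{2\sigma^2}n\right)$$ (e.g. if $\ell(h,Z)-\mathbb{E}\ell(h,Z)$ is $\sigma^2$-sub-Gaussian for every $h$). Let $\alpha>1$ and $\gamma=\frac{\alpha}{\alpha-1}$. Then $$\mathbb{E}\left[|L_S(H)-L_{\mathcal{D}}(H)|\right]\le\sqrt{\frac{2\sigma^2\gamma}{n}}\left(\sqrt{\frac{\log2+I_\alpha(S;\mathcal{A}(S))}{\gamma}}+\frac{1}{2\sqrt{\frac{\log2+I_\alpha(S;\mathcal{A}(S))}{\gamma}}}\right).$$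
   Context: $L_{\mathcal{D}}(h)=\mathbb{E}_{Z\sim\mathcal{D}}[\ell(h,Z)]$ (the expected loss of $h$), and for $s=(z_1,\dots,z_n)$, $L_s(h)=\frac1n\sum_{i=1}^n\ell(h,z_i)$. A real random variable $W$ is $\sigma^2$-sub-Gaussian if $\mathbb{E}[e^{\lambda W}]\le e^{\lambda^2\sigma^2/2}$ for all $\lambda$. Sibson's $\alpha$-mutual information is $I_\alpha(S;H)=\min_{Q_H}D_\alpha(\mathcal{P}_{SH}\|\mathcal{P}_SQ_H)$ with $D_\alpha(\mathcal{P}\|\mathcal{Q})=\frac{1}{\alpha-1}\ln\int p^\alpha q^{1-\alpha}d\mu$ the Rényi divergence. Logarithms are natural. *)

theory Defs
  imports "HOL-Probability.Probability"
begin

text \<open>If P is not absolutely continuous w.r.t. Q the divergence is +infinity (alpha > 1);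
  otherwise int p^alpha q^(1-alpha) dmu = int (dP/dQ)^alpha dQ.\<close>
definition renyi_div :: "real \<Rightarrow> 'a measure \<Rightarrow> 'a measure \<Rightarrow> ereal" where
  "renyi_div \<alpha> P Q =
     (if sets P = sets Q \<and> absolutely_continuous Q P then
        (let I = (\<integral>\<^sup>+ x. ennreal (enn2real (RN_deriv Q P x) powr \<alpha>) \<partial>Q)
         in if I = \<top> then \<infinity> else ereal (ln (enn2real I) / (\<alpha> - 1)))
      else \<infinity>)"

definition sibson_mi :: "real \<Rightarrow> ('s \<times> 'h) measure \<Rightarrow> 's measure \<Rightarrow> 'h measure \<Rightarrow> ereal" where
  "sibson_mi \<alpha> PSH PS H =
     (INF Q \<in> {Q. prob_space Q \<and> sets Q = sets H}. renyi_div \<alpha> PSH (PS \<Otimes>\<^sub>M Q))"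

end

theory Submission
  imports Defs "HOL-Real_Asymp.Real_Asymp"
begin

text \<open>For any probability measure Q on hypotheses, Hoelder's inequality with exponents \<alpha> and
  \<gamma> = \<alpha>/(\<alpha>-1) applied to the density of P_SH with respect to P_S \<times> Q gives
  P_SH(E) \<le> exp(D_\<alpha>(P_SH || P_S \<times> Q) / \<gamma>) (P_S \<times> Q)(E)^(1/\<gamma>).
  Under the product measure the sample is independent of the hypothesis, so the concentration
  hypothesis bounds the product probability of {|L_S(h) - L_D(h)| > t} by 2 exp(-n t^2 / (2\<sigma>^2)).
  Taking the infimum over Q yields the Gaussian tail
  P(|L_S(H) - L_D(H)| > t) \<le> exp((log 2 + I_\<alpha>) / \<gamma> - n t^2 / (2\<sigma>^2\<gamma>)),
  and integrating the minimum of this tail and 1 gives the bound.\<close>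

lemma Young_inequality_scaled:
  fixes x A m \<alpha> :: real
  assumes \<alpha>: "\<alpha> > 1" and x: "x \<ge> 0" and A: "A > 0" and m: "m > 0"
  shows "x \<le> A powr (1/\<alpha>) * m powr ((\<alpha>-1)/\<alpha>) * (x powr \<alpha> / (\<alpha> * A) + (\<alpha>-1) / (\<alpha> * m))"
proof -
  define q where "q = \<alpha>/(\<alpha>-1)"
  define u where "u = A powr (1/\<alpha>)"
  define v where "v = m powr ((\<alpha>-1)/\<alpha>)"
  have q: "q > 1" and pq: "1/\<alpha> + 1/q = 1" using \<alpha> by (simp_all add: q_def field_simps)
  have u: "u > 0" and v: "v > 0" using A m by (simp_all add: u_def v_def)
  have "(x/u) * (1/v) \<le> (x/u) powr \<alpha> / \<alpha> + (1/v) powr q / q"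
    by (rule Youngs_inequality) (use \<alpha> q pq x u v in auto)
  also have "(x/u) powr \<alpha> = x powr \<alpha> / A"
    using x A \<alpha> by (simp add: powr_divide u_def powr_powr)
  also have "(1/v) powr q = 1 / m"
    using m \<alpha> by (simp add: powr_divide v_def powr_powr q_def)
  finally have "x / (u * v) \<le> x powr \<alpha> / (\<alpha> * A) + (\<alpha>-1) / (\<alpha> * m)"
    using \<alpha> by (simp add: q_def field_simps)
  then show ?thesis using u v by (simp add: u_def v_def field_simps)
qed

lemma emeasure_eq_nn_integral_RN_deriv:
  assumes M: "sigma_finite_measure M" and P: "sigma_finite_measure P" and sets: "sets P = sets M"
    and ac: "absolutely_continuous M P" and E: "E \<in> sets M"
  shows "emeasure P E = (\<integral>\<^sup>+ x. ennreal (enn2real (RN_deriv M P x)) * indicator E x \<partial>M)"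
proof -
  interpret M: sigma_finite_measure M by fact
  have "AE x in M. RN_deriv M P x \<noteq> \<infinity>"
    by (rule M.RN_deriv_finite[OF P ac sets])
  then have "(\<integral>\<^sup>+ x. RN_deriv M P x * indicator E x \<partial>M)
      = (\<integral>\<^sup>+ x. ennreal (enn2real (RN_deriv M P x)) * indicator E x \<partial>M)"
    by (intro nn_integral_cong_AE) (auto simp: ennreal_enn2real_if)
  moreover have "emeasure P E = emeasure (density M (RN_deriv M P)) E"
    by (simp add: M.density_RN_deriv[OF ac sets])
  ultimately show ?thesis using E by (simp add: emeasure_density)
qed

lemma emeasure_le_RN_deriv_powr:
  fixes M P :: "'a measure" and \<alpha> :: real
  defines "A \<equiv> enn2real (\<integral>\<^sup>+ x. ennreal (enn2real (RN_deriv M P x) powr \<alpha>) \<partial>M)"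
  assumes M: "finite_measure M" and P: "finite_measure P" and sets: "sets P = sets M"
    and ac: "absolutely_continuous M P" and \<alpha>: "\<alpha> > 1"
    and A_finite: "(\<integral>\<^sup>+ x. ennreal (enn2real (RN_deriv M P x) powr \<alpha>) \<partial>M) \<noteq> \<top>"
    and E: "E \<in> sets M"
  shows "emeasure P E \<le> ennreal (A powr (1/\<alpha>) * measure M E powr ((\<alpha>-1)/\<alpha>))"
proof -
  interpret M: finite_measure M by fact
  interpret P: finite_measure P by fact
  define G where "G x = enn2real (RN_deriv M P x)" for x
  define m where "m = measure M E"
  have [measurable]: "G \<in> borel_measurable M" unfolding G_def by simp
  have A_eq: "(\<integral>\<^sup>+ x. ennreal (G x powr \<alpha>) \<partial>M) = ennreal A"
    using A_finite by (simp add: A_def G_def ennreal_enn2real_if)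
  have PE: "emeasure P E = (\<integral>\<^sup>+ x. ennreal (G x) * indicator E x \<partial>M)"
    unfolding G_def by (rule emeasure_eq_nn_integral_RN_deriv[OF M.sigma_finite_measure_axioms
        P.sigma_finite_measure_axioms sets ac E])
  consider "A = 0" | "m = 0" | "A > 0" "m > 0"
    using enn2real_nonneg measure_nonneg[of M E] unfolding A_def m_def by (metis less_eq_real_def)
  then show ?thesis
  proof cases
    case 1
    then have "(\<integral>\<^sup>+ x. ennreal (G x powr \<alpha>) \<partial>M) = 0"
      using A_eq by simp
    then have "AE x in M. ennreal (G x powr \<alpha>) = 0"
      by (simp add: nn_integral_0_iff_AE)
    then have "AE x in M. G x = 0"
      by eventually_elim (simp add: G_def)
    then have "emeasure P E = 0"
      unfolding PE by (subst nn_integral_0_iff_AE) (use E in auto)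
    then show ?thesis by simp
  next
    case 2
    then have "E \<in> null_sets M" using E by (simp add: m_def M.emeasure_eq_measure null_sets_def)
    then have "emeasure P E = 0" using ac by (auto simp: absolutely_continuous_def null_sets_def)
    then show ?thesis by simp
  next
    case 3
    define c where "c = A powr (1/\<alpha>) * m powr ((\<alpha>-1)/\<alpha>)"
    have c: "c \<ge> 0" by (simp add: c_def)
    have "ennreal (G x) * indicator E x
        \<le> ennreal (c / (\<alpha> * A)) * ennreal (G x powr \<alpha>) + ennreal (c * (\<alpha>-1) / (\<alpha> * m)) * indicator E x" for x
    proof (cases "x \<in> E")
      case True
      have "G x \<le> c * (G x powr \<alpha> / (\<alpha> * A) + (\<alpha>-1) / (\<alpha> * m))"
        unfolding c_def by (rule Young_inequality_scaled) (use \<alpha> 3 in \<open>auto simp: G_def\<close>)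
      with True c \<alpha> 3 show ?thesis
        by (simp add: ennreal_mult'[symmetric] ennreal_plus[symmetric] distrib_left del: ennreal_plus)
    qed simp
    then have "emeasure P E \<le> (\<integral>\<^sup>+ x. ennreal (c / (\<alpha> * A)) * ennreal (G x powr \<alpha>)
        + ennreal (c * (\<alpha>-1) / (\<alpha> * m)) * indicator E x \<partial>M)"
      unfolding PE by (rule nn_integral_mono)
    also have "\<dots> = ennreal (c / (\<alpha> * A)) * ennreal A + ennreal (c * (\<alpha>-1) / (\<alpha> * m)) * ennreal m"
      using E by (simp add: nn_integral_add nn_integral_cmult A_eq m_def M.emeasure_eq_measure)
    also have "\<dots> = ennreal (c / (\<alpha> * A) * A + c * (\<alpha>-1) / (\<alpha> * m) * m)"
      using c \<alpha> 3 by (simp add: ennreal_mult'[symmetric] ennreal_plus[symmetric] del: ennreal_plus)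
    also have "c / (\<alpha> * A) * A + c * (\<alpha>-1) / (\<alpha> * m) * m = c"
      using \<alpha> 3 by (simp add: field_simps)
    finally show ?thesis by (simp add: c_def m_def)
  qed
qed

lemma renyi_div_ereal_imp_sets_eq: "renyi_div \<alpha> P M = ereal d \<Longrightarrow> sets P = sets M"
  by (auto simp: renyi_div_def split: if_split_asm)

lemma measure_le_exp_renyi_div:
  fixes M P :: "'a measure" and \<alpha> d :: real
  assumes M: "prob_space M" and P: "prob_space P" and \<alpha>: "\<alpha> > 1"
    and d: "renyi_div \<alpha> P M = ereal d" and E: "E \<in> sets M"
  shows "measure P E \<le> exp (d * ((\<alpha>-1)/\<alpha>)) * measure M E powr ((\<alpha>-1)/\<alpha>)"
proof -
  interpret M: prob_space M by fact
  interpret P: prob_space P by fact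
  define Aen where "Aen = (\<integral>\<^sup>+ x. ennreal (enn2real (RN_deriv M P x) powr \<alpha>) \<partial>M)"
  define A where "A = enn2real Aen"
  have sets: "sets P = sets M" and ac: "absolutely_continuous M P" and Aen: "Aen \<noteq> \<top>"
    and d_eq: "d = ln A / (\<alpha> - 1)"
    using d unfolding renyi_div_def Let_def Aen_def[symmetric] A_def[symmetric]
    by (auto split: if_split_asm)
  have Holder: "emeasure P F \<le> ennreal (A powr (1/\<alpha>) * measure M F powr ((\<alpha>-1)/\<alpha>))"
    if "F \<in> sets M" for F
    using emeasure_le_RN_deriv_powr[OF M.finite_measure_axioms P.finite_measure_axioms sets ac \<alpha> _ that] Aen
    by (simp add: A_def Aen_def)
  have "emeasure P (space M) = 1"
    using P.emeasure_space_1 sets_eq_imp_space_eq[OF sets] by simp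
  then have "A \<noteq> 0"
    using Holder[OF sets.top] \<alpha> by auto
  then have "exp (d * ((\<alpha>-1)/\<alpha>)) = A powr (1/\<alpha>)"
    using \<alpha> enn2real_nonneg[of Aen] by (simp add: d_eq powr_def A_def)
  with Holder[OF E] show ?thesis
    by (simp add: P.emeasure_eq_measure)
qed

lemma renyi_div_nonneg:
  assumes "prob_space M" "prob_space P" "\<alpha> > 1"
  shows "renyi_div \<alpha> P M \<ge> 0"
proof (cases "renyi_div \<alpha> P M")
  case (real d)
  have "measure P (space M) = 1" "measure M (space M) = 1"
    using assms(1,2) sets_eq_imp_space_eq[OF renyi_div_ereal_imp_sets_eq[OF real]]
    by (metis prob_space.prob_space)+
  then have "1 \<le> exp (d * ((\<alpha>-1)/\<alpha>))"
    using measure_le_exp_renyi_div[OF assms real sets.top] by simp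
  then have "0 \<le> d * ((\<alpha>-1)/\<alpha>)" by simp
  then show ?thesis using real assms(3) by (simp add: zero_le_mult_iff zero_le_divide_iff)
next
  case MInf
  then show ?thesis by (simp add: renyi_div_def Let_def split: if_split_asm)
qed simp

lemma sibson_mi_nonneg:
  assumes "prob_space PS" "prob_space P" "\<alpha> > 1"
  shows "sibson_mi \<alpha> P PS H \<ge> 0"
  unfolding sibson_mi_def using assms by (auto intro!: INF_greatest renyi_div_nonneg prob_space_pair)

lemma measure_le_exp_renyi_div_pair:
  fixes PS :: "'s measure" and Q :: "'h measure" and P :: "('s \<times> 'h) measure"
  assumes PS: "prob_space PS" and Q: "prob_space Q" and P: "prob_space P" and \<alpha>: "\<alpha> > 1"
    and d: "renyi_div \<alpha> P (PS \<Otimes>\<^sub>M Q) = ereal d" and E: "E \<in> sets (PS \<Otimes>\<^sub>M Q)"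
    and slices: "\<And>h. h \<in> space Q \<Longrightarrow> measure PS ((\<lambda>s. (s, h)) -` E) \<le> B"
  shows "measure P E \<le> exp (d * ((\<alpha>-1)/\<alpha>)) * B powr ((\<alpha>-1)/\<alpha>)"
proof -
  interpret PS: prob_space PS by fact
  interpret Q: prob_space Q by fact
  interpret PQ: pair_prob_space PS Q ..
  have "emeasure (PS \<Otimes>\<^sub>M Q) E = (\<integral>\<^sup>+ h. emeasure PS ((\<lambda>s. (s, h)) -` E) \<partial>Q)"
    by (rule PQ.emeasure_pair_measure_alt2[OF E])
  also have "\<dots> \<le> (\<integral>\<^sup>+ h. ennreal B \<partial>Q)"
    using slices by (intro nn_integral_mono) (simp add: PS.emeasure_eq_measure ennreal_leI)
  finally have "ennreal (measure (PS \<Otimes>\<^sub>M Q) E) \<le> ennreal B"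
    by (simp add: PQ.emeasure_eq_measure Q.emeasure_space_1)
  moreover have "B \<ge> 0"
    using Q.not_empty slices measure_nonneg order_trans by blast
  ultimately have "measure (PS \<Otimes>\<^sub>M Q) E \<le> B" by simp
  have "measure P E \<le> exp (d * ((\<alpha>-1)/\<alpha>)) * measure (PS \<Otimes>\<^sub>M Q) E powr ((\<alpha>-1)/\<alpha>)"
    by (rule measure_le_exp_renyi_div[OF PQ.prob_space_axioms P \<alpha> d E])
  also have "\<dots> \<le> exp (d * ((\<alpha>-1)/\<alpha>)) * B powr ((\<alpha>-1)/\<alpha>)"
    using \<open>measure (PS \<Otimes>\<^sub>M Q) E \<le> B\<close> \<alpha> by (intro mult_left_mono powr_mono2) auto
  finally show ?thesis .
qed

lemma measure_le_exp_sibson_mi: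
  fixes PS :: "'s measure" and H :: "'h measure" and P :: "('s \<times> 'h) measure"
  assumes PS: "prob_space PS" and P: "prob_space P" and \<alpha>: "\<alpha> > 1"
    and I: "sibson_mi \<alpha> P PS H = ereal I" and E: "E \<in> sets (PS \<Otimes>\<^sub>M H)"
    and slices: "\<And>h. h \<in> space H \<Longrightarrow> measure PS ((\<lambda>s. (s, h)) -` E) \<le> B"
  shows "measure P E \<le> exp (I * ((\<alpha>-1)/\<alpha>)) * B powr ((\<alpha>-1)/\<alpha>)"
proof -
  define \<beta> where "\<beta> = (\<alpha>-1)/\<alpha>"
  have \<beta>: "\<beta> > 0" using \<alpha> by (simp add: \<beta>_def)
  show ?thesis unfolding \<beta>_def[symmetric]
  proof (rule field_le_mult_one_interval)
    fix z :: real assume z: "0 < z" "z < 1"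
    define \<delta> where "\<delta> = - ln z / \<beta>"
    have "\<delta> > 0" using z \<beta> by (simp add: \<delta>_def divide_neg_pos)
    then have "sibson_mi \<alpha> P PS H < ereal (I + \<delta>)" using I by simp
    then obtain Q where Q: "prob_space Q" "sets Q = sets H"
      and less: "renyi_div \<alpha> P (PS \<Otimes>\<^sub>M Q) < ereal (I + \<delta>)"
      unfolding sibson_mi_def INF_less_iff by blast
    moreover have "renyi_div \<alpha> P (PS \<Otimes>\<^sub>M Q) \<ge> 0"
      using renyi_div_nonneg[OF prob_space_pair[OF PS Q(1)] P \<alpha>] .
    ultimately obtain d where d: "renyi_div \<alpha> P (PS \<Otimes>\<^sub>M Q) = ereal d" "d < I + \<delta>"
      by (cases "renyi_div \<alpha> P (PS \<Otimes>\<^sub>M Q)") auto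
    have "measure P E \<le> exp (d * \<beta>) * B powr \<beta>"
      unfolding \<beta>_def using E slices sets_eq_imp_space_eq[OF Q(2)]
      by (intro measure_le_exp_renyi_div_pair[OF PS Q(1) P \<alpha> d(1)])
        (simp_all add: sets_pair_measure_cong[OF refl Q(2)])
    then have "z * measure P E \<le> z * (exp (d * \<beta>) * B powr \<beta>)"
      using z by simp
    also have "\<dots> \<le> z * exp ((I + \<delta>) * \<beta>) * B powr \<beta>"
      unfolding mult.assoc using d(2) z \<beta> by (intro mult_left_mono mult_right_mono) auto
    also have "z * exp ((I + \<delta>) * \<beta>) = exp (I * \<beta>)"
    proof -
      have "(I + \<delta>) * \<beta> = I * \<beta> - ln z" using \<beta> by (simp add: \<delta>_def field_simps)
      then show ?thesis using z by (simp add: exp_diff)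
    qed
    finally show "z * measure P E \<le> exp (I * \<beta>) * B powr \<beta>" .
  qed
qed

lemma nn_integral_layer_cake:
  fixes f :: "'a \<Rightarrow> real"
  assumes "sigma_finite_measure M" and f[measurable]: "f \<in> borel_measurable M" and nonneg: "\<And>x. f x \<ge> 0"
  shows "(\<integral>\<^sup>+ x. ennreal (f x) \<partial>M) =
     (\<integral>\<^sup>+ t. indicator {0<..} t * emeasure M {x \<in> space M. t < f x} \<partial>lborel)"
proof -
  interpret pair_sigma_finite M lborel
    by (intro pair_sigma_finite.intro assms(1) lborel.sigma_finite_measure_axioms)
  have "(\<lambda>(x, t). indicator {0<..<f x} t :: ennreal) \<in> borel_measurable (M \<Otimes>\<^sub>M lborel)"
    unfolding indicator_def greaterThanLessThan_iff by measurable
  note Fubini = Fubini'[OF this]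
  have "(\<integral>\<^sup>+ x. ennreal (f x) \<partial>M) = (\<integral>\<^sup>+ x. (\<integral>\<^sup>+ t. indicator {0<..<f x} t \<partial>lborel) \<partial>M)"
    using nonneg by (intro nn_integral_cong) simp
  also have "\<dots> = (\<integral>\<^sup>+ t. (\<integral>\<^sup>+ x. indicator {0<..<f x} t \<partial>M) \<partial>lborel)"
    using Fubini by simp
  also have "\<dots> = (\<integral>\<^sup>+ t. (\<integral>\<^sup>+ x. indicator {0<..} t * indicator {x \<in> space M. t < f x} x \<partial>M) \<partial>lborel)"
    by (intro nn_integral_cong) (auto simp: indicator_def)
  also have "\<dots> = (\<integral>\<^sup>+ t. indicator {0<..} t * emeasure M {x \<in> space M. t < f x} \<partial>lborel)"
    by (intro nn_integral_cong) (simp add: nn_integral_cmult)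
  finally show ?thesis .
qed

lemma nn_integral_mult_exp_square_atLeast:
  fixes a k :: real
  assumes a: "a \<ge> 0" and k: "k > 0"
  shows "(\<integral>\<^sup>+ t. ennreal (t * exp (- t\<^sup>2 / k)) * indicator {a..} t \<partial>lborel) = ennreal (k / 2 * exp (- a\<^sup>2 / k))"
proof -
  have "(\<integral>\<^sup>+ t. ennreal (t * exp (- t\<^sup>2 / k)) * indicator {a..} t \<partial>lborel)
      = ennreal (0 - (- k / 2 * exp (- a\<^sup>2 / k)))"
  proof (rule nn_integral_FTC_atLeast)
    show "DERIV (\<lambda>t. - k / 2 * exp (- t\<^sup>2 / k)) t :> t * exp (- t\<^sup>2 / k)" for t
      using k by (auto intro!: derivative_eq_intros simp: field_simps power2_eq_square)
    show "((\<lambda>t. - k / 2 * exp (- t\<^sup>2 / k)) \<longlongrightarrow> 0) at_top"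
      using k by real_asymp
  qed (use a in auto)
  then show ?thesis by simp
qed

lemma nn_integral_Gaussian_tail_le:
  fixes h :: "real \<Rightarrow> ennreal" and c k :: real
  assumes c: "c > 0" and k: "k > 0"
    and le_1: "\<And>t. t > 0 \<Longrightarrow> h t \<le> 1"
    and le_exp: "\<And>t. t > 0 \<Longrightarrow> h t \<le> ennreal (exp (c - t\<^sup>2 / k))"
  shows "(\<integral>\<^sup>+ t. indicator {0<..} t * h t \<partial>lborel) \<le> ennreal (sqrt k * (sqrt c + 1 / (2 * sqrt c)))"
proof -
  \<comment> \<open>t0 is where the exponential bound crosses 1; beyond it t/t0 \<ge> 1 supplies an antiderivative.\<close>
  define t0 where "t0 = sqrt (k * c)"
  have t0: "t0 > 0" and t0_sq: "t0\<^sup>2 / k = c" using c k by (simp_all add: t0_def)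
  define g where "g t = t / t0 * exp (c - t\<^sup>2 / k)" for t
  have "indicator {0<..} t * h t \<le> indicator {0<..t0} t + ennreal (g t) * indicator {t0..} t" for t
  proof -
    consider "t \<le> 0" | "0 < t" "t \<le> t0" | "t0 < t" by linarith
    then show ?thesis
    proof cases
      case 2
      then show ?thesis using le_1[of t] by (simp add: indicator_def add_increasing2)
    next
      case 3
      have "exp (c - t\<^sup>2 / k) \<le> g t" using 3 t0 by (simp add: g_def field_simps)
      then have "h t \<le> ennreal (g t)" using le_exp[of t] 3 t0 by (meson ennreal_leI order_trans less_trans)
      then show ?thesis using 3 t0 by (simp add: indicator_def)
    qed simp
  qed
  then have "(\<integral>\<^sup>+ t. indicator {0<..} t * h t \<partial>lborel) \<le>
      (\<integral>\<^sup>+ t. indicator {0<..t0} t + ennreal (g t) * indicator {t0..} t \<partial>lborel)"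
    by (rule nn_integral_mono)
  also have "\<dots> = ennreal t0 + (\<integral>\<^sup>+ t. ennreal (g t) * indicator {t0..} t \<partial>lborel)"
    using t0 by (subst nn_integral_add) (auto simp: g_def)
  also have "(\<integral>\<^sup>+ t. ennreal (g t) * indicator {t0..} t \<partial>lborel)
      = ennreal (exp c / t0) * (\<integral>\<^sup>+ t. ennreal (t * exp (- t\<^sup>2 / k)) * indicator {t0..} t \<partial>lborel)"
  proof -
    have "g t = exp c / t0 * (t * exp (- t\<^sup>2 / k))" for t
      by (simp add: g_def exp_add[symmetric])
    then show ?thesis
      using t0 by (subst nn_integral_cmult[symmetric])
        (auto intro!: nn_integral_cong simp: ennreal_mult'[symmetric] indicator_def)
  qed
  also have "\<dots> = ennreal (k / (2 * t0))"
    unfolding nn_integral_mult_exp_square_atLeast[OF less_imp_le[OF t0] k]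
    using t0 k by (simp add: ennreal_mult'[symmetric] exp_minus t0_sq field_simps)
  also have "ennreal t0 + ennreal (k / (2 * t0)) = ennreal (sqrt k * (sqrt c + 1 / (2 * sqrt c)))"
  proof -
    have "t0 = sqrt k * sqrt c" by (simp add: t0_def real_sqrt_mult)
    then have "t0 + k / (2 * t0) = sqrt k * (sqrt c + 1 / (2 * sqrt c))"
      using c k by (simp add: field_simps)
    then show ?thesis using t0 k by (simp add: ennreal_plus[symmetric] del: ennreal_plus)
  qed
  finally show ?thesis .
qed

lemma nn_integral_le_of_Gaussian_tail:
  fixes f :: "'a \<Rightarrow> real" and c k :: real
  assumes P: "prob_space P" and f[measurable]: "f \<in> borel_measurable P" and nonneg: "\<And>x. f x \<ge> 0"
    and c: "c > 0" and k: "k > 0"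
    and tail: "\<And>t. t > 0 \<Longrightarrow> measure P {x \<in> space P. t < f x} \<le> exp (c - t\<^sup>2 / k)"
  shows "(\<integral>\<^sup>+ x. ennreal (f x) \<partial>P) \<le> ennreal (sqrt k * (sqrt c + 1 / (2 * sqrt c)))"
proof -
  interpret prob_space P by fact
  have "(\<integral>\<^sup>+ x. ennreal (f x) \<partial>P) =
      (\<integral>\<^sup>+ t. indicator {0<..} t * emeasure P {x \<in> space P. t < f x} \<partial>lborel)"
    by (rule nn_integral_layer_cake[OF sigma_finite_measure_axioms f nonneg])
  also have "\<dots> \<le> ennreal (sqrt k * (sqrt c + 1 / (2 * sqrt c)))"
    using c k tail by (intro nn_integral_Gaussian_tail_le) (auto simp: emeasure_eq_measure ennreal_leI)
  finally show ?thesis .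
qed

lemma borel_measurable_empirical_mean:
  fixes loss :: "'h \<Rightarrow> 'z \<Rightarrow> real"
  assumes loss[measurable]: "(\<lambda>(h, z). loss h z) \<in> borel_measurable (H \<Otimes>\<^sub>M D)"
  shows "(\<lambda>p. (\<Sum>i<n. loss (snd p) (fst p i)) / real n) \<in> borel_measurable (PiM {..<n} (\<lambda>_. D) \<Otimes>\<^sub>M H)"
proof -
  have "(\<lambda>p. loss (snd p) (fst p i)) \<in> borel_measurable (PiM {..<n} (\<lambda>_. D) \<Otimes>\<^sub>M H)" if "i < n" for i
  proof -
    have "(\<lambda>p. (snd p, fst p i)) \<in> PiM {..<n} (\<lambda>_. D) \<Otimes>\<^sub>M H \<rightarrow>\<^sub>M H \<Otimes>\<^sub>M D"
      using that by (intro measurable_Pair measurable_snd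
          measurable_compose[OF measurable_fst measurable_component_singleton]) auto
    from measurable_comp[OF this loss] show ?thesis by (simp add: comp_def)
  qed
  then show ?thesis by measurable
qed

lemma measure_tail_le_sibson_mi:
  fixes X :: "'s \<times> 'h \<Rightarrow> real" and PS :: "'s measure" and H :: "'h measure"
  assumes PS: "prob_space PS" and P: "prob_space P" and sets_P: "sets P = sets (PS \<Otimes>\<^sub>M H)"
    and \<alpha>: "\<alpha> > 1" and I: "sibson_mi \<alpha> P PS H = ereal I"
    and X[measurable]: "X \<in> borel_measurable (PS \<Otimes>\<^sub>M H)" and v: "v > 0"
    and slices: "\<And>h. h \<in> space H \<Longrightarrow> measure PS {s \<in> space PS. t < X (s, h)} \<le> 2 * exp (- t\<^sup>2 / v)"
  shows "measure P {p \<in> space P. t < X p} \<le> exp ((ln 2 + I) / (\<alpha>/(\<alpha>-1)) - t\<^sup>2 / (v * (\<alpha>/(\<alpha>-1))))"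
proof -
  have space_P: "space P = space (PS \<Otimes>\<^sub>M H)" using sets_P by (rule sets_eq_imp_space_eq)
  have "{p \<in> space P. t < X p} \<in> sets (PS \<Otimes>\<^sub>M H)"
    unfolding space_P by measurable
  then have "measure P {p \<in> space P. t < X p}
      \<le> exp (I * ((\<alpha>-1)/\<alpha>)) * (2 * exp (- t\<^sup>2 / v)) powr ((\<alpha>-1)/\<alpha>)"
  proof (rule measure_le_exp_sibson_mi[OF PS P \<alpha> I])
    fix h assume h: "h \<in> space H"
    then have "(\<lambda>s. (s, h)) -` {p \<in> space P. t < X p} = {s \<in> space PS. t < X (s, h)}"
      by (auto simp: space_P space_pair_measure)
    then show "measure PS ((\<lambda>s. (s, h)) -` {p \<in> space P. t < X p}) \<le> 2 * exp (- t\<^sup>2 / v)"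
      using slices[OF h] by simp
  qed
  also have "\<dots> = exp ((ln 2 + I) / (\<alpha>/(\<alpha>-1)) - t\<^sup>2 / (v * (\<alpha>/(\<alpha>-1))))"
    using \<alpha> v unfolding powr_def by (simp add: ln_mult exp_add[symmetric] field_simps)
  finally show ?thesis .
qed

lemma prob_space_bind_Pair_kernel:
  assumes M: "prob_space M" and K: "K \<in> M \<rightarrow>\<^sub>M prob_algebra N"
  defines "P \<equiv> M \<bind> (\<lambda>x. distr (K x) (M \<Otimes>\<^sub>M N) (\<lambda>y. (x, y)))"
  shows "prob_space P" and "sets P = sets (M \<Otimes>\<^sub>M N)"
proof -
  have kernel: "(\<lambda>x. distr (K x) (M \<Otimes>\<^sub>M N) (\<lambda>y. (x, y))) \<in> M \<rightarrow>\<^sub>M prob_algebra (M \<Otimes>\<^sub>M N)"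
    by (rule measurable_distr_prob_space2[OF K]) simp
  have "M \<in> space (prob_algebra M)" using M by (simp add: space_prob_algebra)
  from prob_space_bind'[OF this kernel] sets_bind'[OF this kernel]
  show "prob_space P" and "sets P = sets (M \<Otimes>\<^sub>M N)" by (simp_all add: P_def)
qed

theorem theorem2:
  fixes D :: "'z measure" and H :: "'h measure" and n :: nat
    and K :: "(nat \<Rightarrow> 'z) \<Rightarrow> 'h measure"
    and loss :: "'h \<Rightarrow> 'z \<Rightarrow> real" and \<sigma> \<alpha> I :: real
    and PS :: "(nat \<Rightarrow> 'z) measure" and PSH :: "((nat \<Rightarrow> 'z) \<times> 'h) measure"
    and PH :: "'h measure"
    and LS :: "(nat \<Rightarrow> 'z) \<Rightarrow> 'h \<Rightarrow> real" and LD :: "'h \<Rightarrow> real" and \<gamma> :: real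
  defines "PS \<equiv> PiM {..<n} (\<lambda>_. D)"
    and "PSH \<equiv> PS \<bind> (\<lambda>s. distr (K s) (PS \<Otimes>\<^sub>M H) (\<lambda>h. (s, h)))"
    and "PH \<equiv> distr PSH H snd"
    and "LS \<equiv> (\<lambda>s h. (\<Sum>i<n. loss h (s i)) / real n)"
    and "LD \<equiv> (\<lambda>h. \<integral>z. loss h z \<partial>D)"
    and "\<gamma> \<equiv> \<alpha> / (\<alpha> - 1)"
  assumes D: "prob_space D"
    and n: "n \<ge> 1"
    and K: "K \<in> PS \<rightarrow>\<^sub>M prob_algebra H"
    and ac: "absolutely_continuous (PS \<Otimes>\<^sub>M PH) PSH"
    and loss_meas: "(\<lambda>(h, z). loss h z) \<in> borel_measurable (H \<Otimes>\<^sub>M D)"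
    and loss_int: "\<forall>h\<in>space H. integrable D (loss h)"
    and \<sigma>: "\<sigma> > 0"
    and conc: "\<forall>h\<in>space H. \<forall>\<eta>>0.
        measure PS {s \<in> space PS. \<bar>LS s h - LD h\<bar> > \<eta>}
          \<le> 2 * exp (- (\<eta>\<^sup>2 / (2 * \<sigma>\<^sup>2)) * real n)"
    and \<alpha>: "\<alpha> > 1"
    and I: "sibson_mi \<alpha> PSH PS H = ereal I"
  shows "(\<integral>\<^sup>+ p. ennreal \<bar>LS (fst p) (snd p) - LD (snd p)\<bar> \<partial>PSH)
    \<le> ennreal (sqrt (2 * \<sigma>\<^sup>2 * \<gamma> / real n) *
          (sqrt ((ln 2 + I) / \<gamma>) + 1 / (2 * sqrt ((ln 2 + I) / \<gamma>))))"
proof -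
  interpret D: prob_space D by (rule D)
  have PS: "prob_space PS" unfolding PS_def by (intro prob_space_PiM D)
  note PSH = prob_space_bind_Pair_kernel[OF PS K, folded PSH_def]
  define X where "X p = \<bar>LS (fst p) (snd p) - LD (snd p)\<bar>" for p
  have "LD \<in> borel_measurable H"
    unfolding LD_def using loss_meas by (intro D.borel_measurable_lebesgue_integral) simp
  then have X: "X \<in> borel_measurable (PS \<Otimes>\<^sub>M H)"
    unfolding X_def LS_def PS_def using borel_measurable_empirical_mean[OF loss_meas] by measurable
  have \<gamma>: "\<gamma> > 0" using \<alpha> by (simp add: \<gamma>_def)
  have "I \<ge> 0" using sibson_mi_nonneg[OF PS PSH(1) \<alpha>, of H] I by simp
  then have c: "(ln 2 + I) / \<gamma> > 0" using \<gamma> by (simp add: add_pos_nonneg)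
  have k: "2 * \<sigma>\<^sup>2 * \<gamma> / real n > 0" using \<sigma> \<gamma> n by simp
  have "measure PSH {p \<in> space PSH. t < X p} \<le> exp ((ln 2 + I) / \<gamma> - t\<^sup>2 / (2 * \<sigma>\<^sup>2 * \<gamma> / real n))"
    if "t > 0" for t
    using measure_tail_le_sibson_mi[OF PS PSH \<alpha> I X, of "2 * \<sigma>\<^sup>2 / real n" t] conc that \<sigma> n
    by (simp add: X_def \<gamma>_def mult_ac)
  then show ?thesis
    using X unfolding X_def measurable_cong_sets[OF PSH(2) refl, symmetric]
    by (intro nn_integral_le_of_Gaussian_tail[OF PSH(1) _ _ c k]) simp_all
qed

end
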